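(* Let $(W,S)$ be a Coxeter system of finite rank with just one bad 5-edge $\{x,y\}$. Let $B_1,\dots,B_n$ ($n\ge0$) be the distinct bad separators of $S$, let $F_i$ be the set of good foci of $B_i$, and put $S_i=B_i\cup F_i$. Then there is a unique subset $S_0\subseteq S$ such that $S_0,S_1,\dots,S_n$ form a reduced visual star decomposition of $(W,S)$ with center $S_0$, namely: $S=S_0\cup S_1\cup\dots\cup S_n$; $S_0\cap S_i=B_i$ is a proper subset of both $S_0$ and $S_i$ for each $i\ge1$; $S_i\cap S_j\subseteq S_0$ for distinct $i,j\ge1$; and any $s,t\in S$ with $m(s,t)<\infty$ lie in a common $S_i$ (so $W$ is the fundamental group of the star of groups with center vertex group $\langle S_0\rangle$, leaf vertex groups $\langle S_i\rangle$ and edge groups $\langle B_i\rangle$); and moreover $\{x,y\}\subseteq S_0$ and $S_0$ has no bad separators (with respect to the Coxeter system $(\langle S_0\rangle,S_0)$ and the bad edge $\{x,y\}$). Equivalently, $(W,S)$ has a unique reduced visual graph of groups decomposition whose graph is a star, whose center vertex system $(\langle S_0\rangle,S_0)$ satisfies $\{x,y\}\subseteq S_0$ and has no bad separators, whose edge systems are $(\langle B_i\rangle,B_i)$ for the bad separators $B_1,\dots,B_n$, and whose other vertex systems $(\langle S_i\rangle,S_i)$ satisfy $B_i=S_0\cap S_i$ and $S_i-B_i=F_i$.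
   Context: Coxeter system $(W,S)$: $W=\langle S\mid (st)^{m(s,t)}\ (m(s,t)<\infty)\rangle$, $m(s,s)=1$, $m(s,t)=m(t,s)\in\{2,\dots,\infty\}$; $\langle A\rangle$ the visual subgroup generated by $A\subseteq S$. $\Gamma(W,S)$: labeled graph on $S$ with edge $\{s,t\}$ iff $s\neq t$, $m(s,t)<\infty$. A simplex is $A\subseteq S$ with all $m(s,t)<\infty$; $A$ is irreducible if the graph on $A$ with edges $m(s,t)\ge3$ is connected; maximal irreducible simplex: not properly contained in another irreducible simplex. $A^\perp=\{s\in S: m(s,a)=2\ \forall a\in A\}$. Types ${\bf G}_3,{\bf G}_4$: Coxeter diagram a path with labels $3,5$ resp. $3,3,5$. A set of bad edges is a set $\mathcal B_2$ of pairs $\{a,b\}\subseteq S$ with $5\le m(a,b)<\infty$ such that every irreducible simplex properly containing $\{a,b\}$ has type ${\bf G}_3$ or ${\bf G}_4$; "just one bad 5-edge $\{x,y\}$" means $\mathcal B_2=\{\{x,y\}\}$ and $m(x,y)=5$. An irreducible simplex is bad if it contains a bad edge. Separation $(S_1,S_0,S_2)$: $S=S_1\cup S_2$, $S_0=S_1\cap S_2$, $S_i-S_0\ne\emptyset$, $m(s,t)=\infty$ for $s\in S_1-S_0$, $t\in S_2-S_0$. $B$ is a $(c,f)$-separator if there is a separation $(S_1,B,S_2)$ with $c\in S_1-B$, $f\in S_2-B$ (equivalently $c,f$ lie in different components of $\Gamma(W,S)-B$); minimal if no proper subset is one. A bad separator of $S$ is a subset $B\subseteq S$ for which there are $a,b\in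 B$ with $m(a,b)=2$ (eyes) and $c\in S-B$ such that $A=\{a,b,c\}$ is a bad maximal irreducible simplex, $B\subseteq\{a,b\}\cup A^\perp$, and there exists $f\in S-B$ such that $B$ is a minimal $(c,f)$-separator of $S$; every such $f$ is a good focus of $B$. *)

theory Defs
  imports Main "HOL-Library.Extended_Nat"
begin

text \<open>A Coxeter system of finite rank is encoded by its finite generating set S and its
Coxeter matrix m, with values in enat (\<infinity> meaning no relation).\<close>

definition coxeter_matrix :: "'a set \<Rightarrow> ('a \<Rightarrow> 'a \<Rightarrow> enat) \<Rightarrow> bool" where
  "coxeter_matrix S m \<longleftrightarrow>
     (\<forall>s\<in>S. m s s = 1) \<and>
     (\<forall>s\<in>S. \<forall>t\<in>S. m s t = m t s) \<and>
     (\<forall>s\<in>S. \<forall>t\<in>S. s \<noteq> t \<longrightarrow> m s t \<ge> 2)"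

definition simplex :: "'a set \<Rightarrow> ('a \<Rightarrow> 'a \<Rightarrow> enat) \<Rightarrow> 'a set \<Rightarrow> bool" where
  "simplex S m A \<longleftrightarrow> A \<subseteq> S \<and> (\<forall>s\<in>A. \<forall>t\<in>A. m s t < \<infinity>)"

definition irreducible :: "('a \<Rightarrow> 'a \<Rightarrow> enat) \<Rightarrow> 'a set \<Rightarrow> bool" where
  "irreducible m A \<longleftrightarrow> A \<noteq> {} \<and>
     (\<forall>a\<in>A. \<forall>b\<in>A. (a, b) \<in> {(s, t). s \<in> A \<and> t \<in> A \<and> m s t \<ge> 3}\<^sup>*)"

definition irred_simplex :: "'a set \<Rightarrow> ('a \<Rightarrow> 'a \<Rightarrow> enat) \<Rightarrow> 'a set \<Rightarrow> bool" where
  "irred_simplex S m A \<longleftrightarrow> simplex S m A \<and> irreducible m A"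

definition max_irred_simplex :: "'a set \<Rightarrow> ('a \<Rightarrow> 'a \<Rightarrow> enat) \<Rightarrow> 'a set \<Rightarrow> bool" where
  "max_irred_simplex S m A \<longleftrightarrow> irred_simplex S m A \<and>
     \<not> (\<exists>A'. A \<subset> A' \<and> irred_simplex S m A')"

definition type_G3 :: "('a \<Rightarrow> 'a \<Rightarrow> enat) \<Rightarrow> 'a set \<Rightarrow> bool" where
  "type_G3 m A \<longleftrightarrow> (\<exists>a b c. distinct [a, b, c] \<and> A = {a, b, c} \<and>
      m a b = 3 \<and> m b c = 5 \<and> m a c = 2)"

definition type_G4 :: "('a \<Rightarrow> 'a \<Rightarrow> enat) \<Rightarrow> 'a set \<Rightarrow> bool" where
  "type_G4 m A \<longleftrightarrow> (\<exists>a b c d. distinct [a, b, c, d] \<and> A = {a, b, c, d} \<and>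
      m a b = 3 \<and> m b c = 3 \<and> m c d = 5 \<and>
      m a c = 2 \<and> m a d = 2 \<and> m b d = 2)"

definition bad_edge :: "'a set \<Rightarrow> ('a \<Rightarrow> 'a \<Rightarrow> enat) \<Rightarrow> 'a \<Rightarrow> 'a \<Rightarrow> bool" where
  "bad_edge S m x y \<longleftrightarrow> x \<in> S \<and> y \<in> S \<and> x \<noteq> y \<and> 5 \<le> m x y \<and> m x y < \<infinity> \<and>
     (\<forall>A. irred_simplex S m A \<and> {x, y} \<subset> A \<longrightarrow> type_G3 m A \<or> type_G4 m A)"

definition perp :: "'a set \<Rightarrow> ('a \<Rightarrow> 'a \<Rightarrow> enat) \<Rightarrow> 'a set \<Rightarrow> 'a set" where
  "perp S m A = {s \<in> S. \<forall>a\<in>A. m s a = 2}"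

definition separator :: "'a set \<Rightarrow> ('a \<Rightarrow> 'a \<Rightarrow> enat) \<Rightarrow> 'a set \<Rightarrow> 'a \<Rightarrow> 'a \<Rightarrow> bool" where
  "separator S m B c f \<longleftrightarrow> (\<exists>S1 S2. S = S1 \<union> S2 \<and> B = S1 \<inter> S2 \<and>
      S1 - B \<noteq> {} \<and> S2 - B \<noteq> {} \<and>
      (\<forall>s\<in>S1 - B. \<forall>t\<in>S2 - B. m s t = \<infinity>) \<and>
      c \<in> S1 - B \<and> f \<in> S2 - B)"

definition min_separator :: "'a set \<Rightarrow> ('a \<Rightarrow> 'a \<Rightarrow> enat) \<Rightarrow> 'a set \<Rightarrow> 'a \<Rightarrow> 'a \<Rightarrow> bool" where
  "min_separator S m B c f \<longleftrightarrow> separator S m B c f \<and>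
      \<not> (\<exists>B'. B' \<subset> B \<and> separator S m B' c f)"

definition bad_sep_witness :: "'a set \<Rightarrow> ('a \<Rightarrow> 'a \<Rightarrow> enat) \<Rightarrow> 'a \<Rightarrow> 'a \<Rightarrow> 'a set \<Rightarrow>
    'a \<Rightarrow> 'a \<Rightarrow> 'a \<Rightarrow> bool" where
  "bad_sep_witness S m x y B a b c \<longleftrightarrow> B \<subseteq> S \<and> a \<in> B \<and> b \<in> B \<and> m a b = 2 \<and>
      c \<in> S - B \<and> max_irred_simplex S m {a, b, c} \<and> {x, y} \<subseteq> {a, b, c} \<and>
      B \<subseteq> {a, b} \<union> perp S m {a, b, c}"

definition good_focus :: "'a set \<Rightarrow> ('a \<Rightarrow> 'a \<Rightarrow> enat) \<Rightarrow> 'a \<Rightarrow> 'a \<Rightarrow> 'a set \<Rightarrow> 'a \<Rightarrow> bool" where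
  "good_focus S m x y B f \<longleftrightarrow> (\<exists>a b c. bad_sep_witness S m x y B a b c \<and>
      f \<in> S - B \<and> min_separator S m B c f)"

definition bad_separators :: "'a set \<Rightarrow> ('a \<Rightarrow> 'a \<Rightarrow> enat) \<Rightarrow> 'a \<Rightarrow> 'a \<Rightarrow> 'a set set" where
  "bad_separators S m x y = {B. B \<subseteq> S \<and> (\<exists>f. good_focus S m x y B f)}"

definition good_foci :: "'a set \<Rightarrow> ('a \<Rightarrow> 'a \<Rightarrow> enat) \<Rightarrow> 'a \<Rightarrow> 'a \<Rightarrow> 'a set \<Rightarrow> 'a set" where
  "good_foci S m x y B = {f. good_focus S m x y B f}"

definition reduced_visual_star_decomp ::
  "'a set \<Rightarrow> ('a \<Rightarrow> 'a \<Rightarrow> enat) \<Rightarrow> 'a set set \<Rightarrow> ('a set \<Rightarrow> 'a set) \<Rightarrow> 'a set \<Rightarrow> bool" where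
  "reduced_visual_star_decomp S m \<B> SL S0 \<longleftrightarrow>
     S = S0 \<union> (\<Union>B\<in>\<B>. SL B) \<and>
     (\<forall>B\<in>\<B>. S0 \<inter> SL B = B \<and> B \<subset> S0 \<and> B \<subset> SL B) \<and>
     (\<forall>B\<in>\<B>. \<forall>B'\<in>\<B>. B \<noteq> B' \<longrightarrow> SL B \<inter> SL B' \<subseteq> S0) \<and>
     (\<forall>s\<in>S. \<forall>t\<in>S. m s t < \<infinity> \<longrightarrow>
        ({s, t} \<subseteq> S0 \<or> (\<exists>B\<in>\<B>. {s, t} \<subseteq> SL B)))"

end

(* Every vertex of a bad separator B is adjacent to both x and y, while the vertex c of its
   witnessing simplex {a, b, c} is x or y, because the eyes a, b commute and m(x,y) = 5.
   Hence a good focus of B, which is separated from c by B, lies in no simplex containing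
   {x, y}, and in particular in no bad separator. Good foci of B are closed under adjacency
   outside B, so by minimality of B every b in B has a neighbour among them; this forces a
   good focus to determine its bad separator. The center S0 is S minus all good foci, and the
   star decomposition follows. A path from c avoiding a bad separator of S0 that leaves S0
   must re-enter it through some bad separator B of S, all of whose vertices are adjacent
   to c; so a bad separator of S0 would be one of S with a good focus inside S0. Uniqueness
   holds because a reduced star decomposition with prescribed leaves determines its center. *)

theory Submission
  imports Defs
begin

(* Otherwise every finiteness condition m s t < \<infinity> is turned into an existential over enat. *)
declare not_infinity_eq [iff del]

definition coxeter_graph :: "('a \<Rightarrow> 'a \<Rightarrow> enat) \<Rightarrow> 'a set \<Rightarrow> ('a \<times> 'a) set" where
  "coxeter_graph m T = {(s, t). s \<in> T \<and> t \<in> T \<and> m s t < \<infinity>}"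

lemma coxeter_graph_iff [simp]:
  "(s, t) \<in> coxeter_graph m T \<longleftrightarrow> s \<in> T \<and> t \<in> T \<and> m s t < \<infinity>"
  by (simp add: coxeter_graph_def)

lemma coxeter_matrix_sym: "coxeter_matrix S m \<Longrightarrow> s \<in> S \<Longrightarrow> t \<in> S \<Longrightarrow> m s t = m t s"
  by (simp add: coxeter_matrix_def)

lemma rtrancl_coxeter_graph_step:
  "(u, s) \<in> (coxeter_graph m T)\<^sup>* \<Longrightarrow> s \<in> T \<Longrightarrow> t \<in> T \<Longrightarrow> m s t < \<infinity> \<Longrightarrow>
    (u, t) \<in> (coxeter_graph m T)\<^sup>*"
  by (simp add: rtrancl.rtrancl_into_rtrancl)

lemma rtrancl_coxeter_graph_mem:
  "(u, v) \<in> (coxeter_graph m T)\<^sup>* \<Longrightarrow> u \<in> T \<Longrightarrow> v \<in> T"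
  by (induction rule: rtrancl_induct) auto

lemma rtrancl_coxeter_graph_mono:
  assumes "T \<subseteq> T'" "(u, v) \<in> (coxeter_graph m T)\<^sup>*"
  shows "(u, v) \<in> (coxeter_graph m T')\<^sup>*"
proof -
  have "coxeter_graph m T \<subseteq> coxeter_graph m T'" using assms(1) by auto
  then show ?thesis using assms(2) rtrancl_mono by blast
qed

lemma rtrancl_coxeter_graph_sym:
  assumes "coxeter_matrix S m" "T \<subseteq> S" "(u, v) \<in> (coxeter_graph m T)\<^sup>*"
  shows "(v, u) \<in> (coxeter_graph m T)\<^sup>*"
proof -
  have "sym (coxeter_graph m T)"
    using assms(1,2) unfolding sym_def by (auto simp: coxeter_matrix_sym subset_iff)
  then show ?thesis using assms(3) sym_rtrancl symD by metis
qed

lemma separator_iff: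
  "separator S m B c f \<longleftrightarrow>
     B \<subseteq> S \<and> c \<in> S - B \<and> f \<in> S - B \<and> (c, f) \<notin> (coxeter_graph m (S - B))\<^sup>*"
proof
  assume "separator S m B c f"
  then obtain S1 S2 where S: "S = S1 \<union> S2" "B = S1 \<inter> S2"
      and inf: "\<forall>s\<in>S1 - B. \<forall>t\<in>S2 - B. m s t = \<infinity>" and c: "c \<in> S1 - B" and f: "f \<in> S2 - B"
    unfolding separator_def by blast
  have "t \<in> S1 - B" if "(c, t) \<in> (coxeter_graph m (S - B))\<^sup>*" for t
    using that
  proof (induction rule: rtrancl_induct)
    case (step t t')
    then show ?case using S inf by auto
  qed (use c in simp)
  then show "B \<subseteq> S \<and> c \<in> S - B \<and> f \<in> S - B \<and> (c, f) \<notin> (coxeter_graph m (S - B))\<^sup>*"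
    using S c f by blast
next
  assume H: "B \<subseteq> S \<and> c \<in> S - B \<and> f \<in> S - B \<and> (c, f) \<notin> (coxeter_graph m (S - B))\<^sup>*"
  define K where "K = {t. (c, t) \<in> (coxeter_graph m (S - B))\<^sup>*}"
  have K: "K \<subseteq> S - B" "c \<in> K" "f \<notin> K"
    using H rtrancl_coxeter_graph_mem unfolding K_def by fastforce+
  have "m s t = \<infinity>" if "s \<in> K" "t \<in> S - K - B" for s t
    using that K rtrancl_coxeter_graph_step[of c s m "S - B" t]
    unfolding K_def by (cases "m s t") auto
  then show "separator S m B c f"
    unfolding separator_def using H K
    by (intro exI[of _ "B \<union> K"] exI[of _ "S - K"]) auto
qed

lemma separator_adjacent:
  assumes "coxeter_matrix S m" "separator S m B c f" "t \<in> S - B" "m f t < \<infinity>"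
  shows "separator S m B c t"
proof -
  have "m t f < \<infinity>" using assms(1-4) coxeter_matrix_sym[of S m t f] by (auto simp: separator_iff)
  then show ?thesis
    using assms(2,3) rtrancl_coxeter_graph_step[of c t m "S - B" f] by (auto simp: separator_iff)
qed

lemma min_separator_adjacent:
  assumes cm: "coxeter_matrix S m" and ms: "min_separator S m B c f"
    and t: "t \<in> S - B" "m f t < \<infinity>"
  shows "min_separator S m B c t"
  unfolding min_separator_def
proof (intro conjI notI)
  show "separator S m B c t" using separator_adjacent[OF cm _ t] ms by (simp add: min_separator_def)
next
  assume "\<exists>B'. B' \<subset> B \<and> separator S m B' c t"
  then obtain B' where B': "B' \<subset> B" "separator S m B' c t" by blast
  have "f \<in> S - B" using ms by (simp add: min_separator_def separator_iff)
  then have "f \<in> S - B'" "m t f < \<infinity>" using B'(1) t coxeter_matrix_sym[OF cm, of f t] by auto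
  then have "separator S m B' c f" using separator_adjacent[OF cm B'(2)] by blast
  then show False using ms B'(1) unfolding min_separator_def by blast
qed

text \<open>Otherwise B - {b} would still separate c from f.\<close>

lemma min_separator_adjacent_component:
  assumes cm: "coxeter_matrix S m" and ms: "min_separator S m B c f" and b: "b \<in> B"
  obtains t where "(f, t) \<in> (coxeter_graph m (S - B))\<^sup>*" "m t b < \<infinity>"
proof (rule ccontr)
  assume no_nbr: "\<not> thesis"
  note nbr = that
  have H: "B \<subseteq> S" "c \<in> S - B" "f \<in> S - B" "(c, f) \<notin> (coxeter_graph m (S - B))\<^sup>*"
    using ms by (auto simp: min_separator_def separator_iff)
  have comp: "(f, t) \<in> (coxeter_graph m (S - B))\<^sup>*"
    if "(f, t) \<in> (coxeter_graph m (S - (B - {b})))\<^sup>*" for t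
    using that
  proof (induction rule: rtrancl_induct)
    case (step t t')
    have "t' \<noteq> b"
    proof
      assume "t' = b"
      then have "m t b < \<infinity>" using step.hyps(2) by simp
      then show False using nbr[OF step.IH] no_nbr by blast
    qed
    moreover have "t \<in> S - B" using rtrancl_coxeter_graph_mem[OF step.IH] H(3) .
    ultimately show ?case using step.hyps(2) rtrancl_coxeter_graph_step[OF step.IH] by simp
  qed simp
  have "(c, f) \<notin> (coxeter_graph m (S - (B - {b})))\<^sup>*"
  proof
    assume "(c, f) \<in> (coxeter_graph m (S - (B - {b})))\<^sup>*"
    then have "(f, c) \<in> (coxeter_graph m (S - B))\<^sup>*"
      using comp rtrancl_coxeter_graph_sym[OF cm] by blast
    then show False using H rtrancl_coxeter_graph_sym[OF cm] by blast
  qed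
  then have "separator S m (B - {b}) c f" using H by (auto simp: separator_iff)
  moreover have "B - {b} \<subset> B" using b by blast
  ultimately show False using ms unfolding min_separator_def by blast
qed

lemma separator_subset:
  assumes "separator S m B c f" "B \<subseteq> T" "T \<subseteq> S" "c \<in> T" "f \<in> T"
  shows "separator T m B c f"
proof -
  have "T - B \<subseteq> S - B" using assms(3) by blast
  then show ?thesis
    using assms rtrancl_coxeter_graph_mono[of "T - B" "S - B" c f m] by (auto simp: separator_iff)
qed

lemma min_separator_of_subset:
  assumes ms: "min_separator T m B c f" and sep: "separator S m B c f" and T: "T \<subseteq> S"
  shows "min_separator S m B c f"
  unfolding min_separator_def
proof (intro conjI notI sep)
  assume "\<exists>B'. B' \<subset> B \<and> separator S m B' c f"
  then obtain B' where B': "B' \<subset> B" "separator S m B' c f" by blast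
  have "B \<subseteq> T" "c \<in> T" "f \<in> T" using ms by (auto simp: min_separator_def separator_iff)
  then have "separator T m B' c f" using separator_subset[OF B'(2) _ T] B'(1) by blast
  then show False using ms B'(1) unfolding min_separator_def by blast
qed

lemma good_focus_mem: "good_focus S m x y B f \<Longrightarrow> f \<in> S - B"
  by (auto simp: good_focus_def)

lemma good_focus_bad_separator:
  "good_focus S m x y B f \<Longrightarrow> B \<in> bad_separators S m x y"
  by (auto simp: good_focus_def bad_separators_def bad_sep_witness_def)

lemma bad_separator_witness:
  assumes "B \<in> bad_separators S m x y"
  obtains a b c where "bad_sep_witness S m x y B a b c"
  using assms by (auto simp: bad_separators_def good_focus_def)

locale coxeter_5_edge =
  fixes S :: "'a set" and m :: "'a \<Rightarrow> 'a \<Rightarrow> enat" and x y :: 'a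
  assumes coxeter: "coxeter_matrix S m"
    and x_in_S: "x \<in> S" and y_in_S: "y \<in> S" and m_xy: "m x y = 5"
begin

lemma m_sym: "s \<in> S \<Longrightarrow> t \<in> S \<Longrightarrow> m s t = m t s"
  using coxeter_matrix_sym[OF coxeter] .

lemma m_diag: "s \<in> S \<Longrightarrow> m s s = 1"
  using coxeter by (simp add: coxeter_matrix_def)

lemma bad_sep_witness_apex:
  assumes "bad_sep_witness S m x y B a b c"
  shows "c \<in> {x, y}"
proof (rule ccontr)
  assume "c \<notin> {x, y}"
  then have xy: "{x, y} \<subseteq> {a, b}" using assms by (auto simp: bad_sep_witness_def)
  have "a \<in> S" "b \<in> S" "m a b = 2" using assms by (auto simp: bad_sep_witness_def)
  then have "m s t \<in> {1, 2}" if "s \<in> {a, b}" "t \<in> {a, b}" for s t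
    using that m_sym[of a b] m_diag by auto
  then show False using xy m_xy by force
qed

lemma bad_sep_witness_simplex:
  assumes w: "bad_sep_witness S m x y B a b c" and t: "t \<in> B"
  shows "simplex S m {x, y, t}"
proof -
  have abc: "simplex S m {a, b, c}" and xy: "{x, y} \<subseteq> {a, b, c}"
    using w by (auto simp: bad_sep_witness_def max_irred_simplex_def irred_simplex_def)
  consider "t \<in> {a, b}" | "t \<in> perp S m {a, b, c}" using w t by (auto simp: bad_sep_witness_def)
  then show ?thesis
  proof cases
    case 1
    then show ?thesis using abc xy unfolding simplex_def by blast
  next
    case 2
    then have t: "t \<in> S" "m t x = 2" "m t y = 2" using xy by (auto simp: perp_def)
    then have "m x t = 2" "m y t = 2" using x_in_S y_in_S m_sym by metis+
    moreover have "m x y < \<infinity>" "m y x < \<infinity>" "m x x < \<infinity>" "m y y < \<infinity>"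
      using abc xy unfolding simplex_def by blast+
    moreover have "m t t < \<infinity>" using m_diag[OF t(1)] by simp
    ultimately show ?thesis using t x_in_S y_in_S unfolding simplex_def by auto
  qed
qed

lemma good_focus_notin_simplex:
  assumes "good_focus S m x y B g" "simplex S m A" "{x, y} \<subseteq> A"
  shows "g \<notin> A"
proof
  assume "g \<in> A"
  obtain a b c where w: "bad_sep_witness S m x y B a b c" and sep: "separator S m B c g"
    using assms(1) by (auto simp: good_focus_def min_separator_def)
  have "c \<in> A" using bad_sep_witness_apex[OF w] assms(3) by blast
  then have "m c g < \<infinity>" using \<open>g \<in> A\<close> assms(2) by (simp add: simplex_def)
  then have "(c, g) \<in> (coxeter_graph m (S - B))\<^sup>*" using sep by (auto simp: separator_iff)
  then show False using sep by (simp add: separator_iff)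
qed

lemma good_focus_notin_bad_separator:
  assumes "good_focus S m x y B g" "B' \<in> bad_separators S m x y"
  shows "g \<notin> B'"
proof
  assume "g \<in> B'"
  obtain a b c where "bad_sep_witness S m x y B' a b c"
    using assms(2) by (rule bad_separator_witness)
  then have "simplex S m {x, y, g}" using \<open>g \<in> B'\<close> by (rule bad_sep_witness_simplex)
  then show False using good_focus_notin_simplex[OF assms(1)] by blast
qed

lemma good_focus_adjacent:
  assumes "good_focus S m x y B f" "t \<in> S - B" "m f t < \<infinity>"
  shows "good_focus S m x y B t"
  using assms min_separator_adjacent[OF coxeter] unfolding good_focus_def by blast

lemma good_focus_component:
  assumes F: "good_focus S m x y B f" and path: "(f, t) \<in> (coxeter_graph m (S - B))\<^sup>*"
  shows "(f, t) \<in> (coxeter_graph m (good_foci S m x y B))\<^sup>*"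
  using path
proof (induction rule: rtrancl_induct)
  case (step t t')
  have "good_focus S m x y B t"
    using rtrancl_coxeter_graph_mem[OF step.IH] F by (simp add: good_foci_def)
  moreover have "good_focus S m x y B t'" using good_focus_adjacent[OF calculation] step.hyps(2) by simp
  ultimately show ?case
    using rtrancl_coxeter_graph_step[OF step.IH] step.hyps(2) by (simp add: good_foci_def)
qed simp

text \<open>The component of a focus f in S - B consists of foci of B, hence avoids every other bad
  separator B'; by minimality each b \<in> B has a neighbour there, so b \<notin> B' would make b
  a focus of B', which lies in the bad separator B.\<close>

lemma good_focus_unique:
  assumes "good_focus S m x y B f" "good_focus S m x y B' f"
  shows "B = B'"
proof -
  have "B \<subseteq> B'" if F: "good_focus S m x y B f" and F': "good_focus S m x y B' f" for B B'
  proof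
    fix b assume b: "b \<in> B"
    obtain c where "min_separator S m B c f"
      using F unfolding good_focus_def by blast
    then obtain t where path: "(f, t) \<in> (coxeter_graph m (S - B))\<^sup>*" and tb: "m t b < \<infinity>"
      using min_separator_adjacent_component[OF coxeter _ b] by blast
    have "good_foci S m x y B \<subseteq> S - B'"
      using good_focus_notin_bad_separator good_focus_bad_separator[OF F']
      by (auto simp: good_foci_def dest: good_focus_mem)
    then have path': "(f, t) \<in> (coxeter_graph m (S - B'))\<^sup>*"
      using good_focus_component[OF F path] by (rule rtrancl_coxeter_graph_mono)
    show "b \<in> B'"
    proof (rule ccontr)
      assume "b \<notin> B'"
      moreover have "t \<in> S - B'" using rtrancl_coxeter_graph_mem[OF path'] good_focus_mem[OF F'] .
      moreover have "b \<in> S" using F b by (auto simp: good_focus_def bad_sep_witness_def)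
      ultimately have "(f, b) \<in> (coxeter_graph m (S - B'))\<^sup>*"
        using rtrancl_coxeter_graph_step[OF path' _ _ tb] by blast
      then have "(f, b) \<in> (coxeter_graph m (good_foci S m x y B'))\<^sup>*"
        by (rule good_focus_component[OF F'])
      moreover have "f \<in> good_foci S m x y B'" using F' by (simp add: good_foci_def)
      ultimately have "good_focus S m x y B' b"
        using rtrancl_coxeter_graph_mem by (fastforce simp: good_foci_def)
      then show False
        using good_focus_notin_bad_separator good_focus_bad_separator[OF F] b by blast
    qed
  qed
  then show ?thesis using assms by blast
qed

definition center :: "'a set" where
  "center = S - (\<Union>B. good_foci S m x y B)"

lemma mem_center: "s \<in> center \<longleftrightarrow> s \<in> S \<and> (\<forall>B. \<not> good_focus S m x y B s)"
  by (auto simp: center_def good_foci_def)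

lemma center_subset: "center \<subseteq> S"
  by (auto simp: center_def)

lemma bad_edge_subset_center: "{x, y} \<subseteq> center"
proof -
  have "simplex S m {x, y}"
    using x_in_S y_in_S m_xy m_sym[of x y] m_diag by (auto simp: simplex_def)
  then show ?thesis using good_focus_notin_simplex x_in_S y_in_S by (auto simp: mem_center)
qed

lemma bad_separator_subset_center:
  assumes "B \<in> bad_separators S m x y"
  shows "B \<subseteq> center"
proof
  fix b assume "b \<in> B"
  moreover have "B \<subseteq> S" using assms by (simp add: bad_separators_def)
  ultimately show "b \<in> center"
    using good_focus_notin_bad_separator[OF _ assms] by (auto simp: mem_center)
qed

lemma center_inter_leaf:
  assumes B: "B \<in> bad_separators S m x y"
  shows "center \<inter> (B \<union> good_foci S m x y B) = B" "B \<subset> center"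
    "B \<subset> B \<union> good_foci S m x y B"
proof -
  obtain f where F: "good_focus S m x y B f"
    using B by (auto simp: bad_separators_def)
  then obtain a b c where w: "bad_sep_witness S m x y B a b c"
    by (auto simp: good_focus_def)
  have "c \<in> center" "c \<notin> B"
    using bad_sep_witness_apex[OF w] bad_edge_subset_center w by (auto simp: bad_sep_witness_def)
  then show "B \<subset> center" using bad_separator_subset_center[OF B] by blast
  show "center \<inter> (B \<union> good_foci S m x y B) = B"
    using bad_separator_subset_center[OF B] by (auto simp: mem_center good_foci_def)
  show "B \<subset> B \<union> good_foci S m x y B"
    using F good_focus_mem[OF F] by (auto simp: good_foci_def)
qed

lemma adjacent_focus_in_leaf:
  assumes "good_focus S m x y B s" "t \<in> S" "m s t < \<infinity>"
  shows "{s, t} \<subseteq> B \<union> good_foci S m x y B"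
  using assms good_focus_adjacent[OF assms(1)] by (auto simp: good_foci_def)

lemma center_union_leaves:
  "S = center \<union> (\<Union>B\<in>bad_separators S m x y. B \<union> good_foci S m x y B)"
proof (intro equalityI subsetI)
  fix s assume s: "s \<in> S"
  show "s \<in> center \<union> (\<Union>B\<in>bad_separators S m x y. B \<union> good_foci S m x y B)"
  proof (cases "s \<in> center")
    case False
    then obtain B where "good_focus S m x y B s" using s by (auto simp: mem_center)
    then show ?thesis using good_focus_bad_separator[of S m x y B s] by (auto simp: good_foci_def)
  qed simp
next
  fix s assume "s \<in> center \<union> (\<Union>B\<in>bad_separators S m x y. B \<union> good_foci S m x y B)"
  then show "s \<in> S"
    using center_subset by (auto simp: bad_separators_def good_foci_def dest: good_focus_mem)
qed

lemma leaves_inter_subset_center: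
  assumes "B \<in> bad_separators S m x y" "B' \<in> bad_separators S m x y" "B \<noteq> B'"
  shows "(B \<union> good_foci S m x y B) \<inter> (B' \<union> good_foci S m x y B') \<subseteq> center"
proof
  fix s assume s: "s \<in> (B \<union> good_foci S m x y B) \<inter> (B' \<union> good_foci S m x y B')"
  show "s \<in> center"
  proof (rule ccontr)
    assume "s \<notin> center"
    then have "s \<notin> B" "s \<notin> B'" using bad_separator_subset_center assms(1,2) by blast+
    then have "good_focus S m x y B s" "good_focus S m x y B' s"
      using s by (auto simp: good_foci_def)
    then show False using good_focus_unique assms(3) by blast
  qed
qed

lemma adjacent_in_center_or_leaf:
  assumes st: "s \<in> S" "t \<in> S" "m s t < \<infinity>"
  shows "{s, t} \<subseteq> center \<or>
    (\<exists>B\<in>bad_separators S m x y. {s, t} \<subseteq> B \<union> good_foci S m x y B)"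
proof -
  have ts: "m t s < \<infinity>" using st m_sym by simp
  consider B where "good_focus S m x y B s" | B where "good_focus S m x y B t"
    | "{s, t} \<subseteq> center"
    using st by (metis insert_subset empty_subsetI mem_center)
  then show ?thesis
  proof cases
    case (1 B)
    then have "{s, t} \<subseteq> B \<union> good_foci S m x y B" using adjacent_focus_in_leaf st(2,3) by blast
    then show ?thesis using good_focus_bad_separator[OF 1] by blast
  next
    case (2 B)
    then have "{t, s} \<subseteq> B \<union> good_foci S m x y B" using adjacent_focus_in_leaf st(1) ts by blast
    then show ?thesis using good_focus_bad_separator[OF 2] by blast
  qed blast
qed

lemma reduced_visual_star_decomp_center:
  "reduced_visual_star_decomp S m (bad_separators S m x y)
     (\<lambda>B. B \<union> good_foci S m x y B) center"
  unfolding reduced_visual_star_decomp_def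
  by (intro conjI center_union_leaves ballI impI center_inter_leaf leaves_inter_subset_center
      adjacent_in_center_or_leaf) assumption+

lemma max_irred_simplex_center:
  assumes max: "max_irred_simplex center m A" and xy: "{x, y} \<subseteq> A"
  shows "max_irred_simplex S m A"
proof -
  have "\<not> irred_simplex S m A'" if "A \<subset> A'" for A'
  proof
    assume A': "irred_simplex S m A'"
    then have simplex: "simplex S m A'" by (simp add: irred_simplex_def)
    moreover have "{x, y} \<subseteq> A'" using xy that by blast
    ultimately have "A' \<subseteq> center"
      using good_focus_notin_simplex[OF _ simplex] by (auto simp: mem_center simplex_def)
    then have "irred_simplex center m A'" using A' by (auto simp: irred_simplex_def simplex_def)
    then show False using max that by (auto simp: max_irred_simplex_def)
  qed
  moreover have "irred_simplex S m A"
    using max center_subset by (auto simp: max_irred_simplex_def irred_simplex_def simplex_def)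
  ultimately show ?thesis by (auto simp: max_irred_simplex_def)
qed

lemma bad_sep_witness_center:
  assumes w: "bad_sep_witness center m x y B a b c"
  shows "bad_sep_witness S m x y B a b c"
proof -
  have "perp center m {a, b, c} \<subseteq> perp S m {a, b, c}"
    using center_subset by (auto simp: perp_def)
  moreover have "max_irred_simplex S m {a, b, c}"
    using w max_irred_simplex_center by (simp add: bad_sep_witness_def)
  ultimately show ?thesis using w center_subset by (auto simp: bad_sep_witness_def)
qed

lemma good_focus_adjacent_center:
  assumes "good_focus S m x y B f" "t \<in> center" "m f t < \<infinity>"
  shows "t \<in> B"
  using assms good_focus_adjacent[OF assms(1)] by (auto simp: mem_center)

lemma good_focus_adjacent_outside_center:
  assumes "good_focus S m x y B f" "t \<in> S - center" "m f t < \<infinity>"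
  shows "good_focus S m x y B t"
proof -
  have "t \<notin> B"
    using assms(2) bad_separator_subset_center[OF good_focus_bad_separator[OF assms(1)]] by blast
  then show ?thesis using good_focus_adjacent[OF assms(1)] assms(2,3) by blast
qed

lemma center_neighbour_of_focus_adjacent_apex:
  assumes c: "c \<in> {x, y}" "c \<notin> B" and F: "good_focus S m x y B' w"
    and w': "w' \<in> center - B" "m w w' < \<infinity>"
  shows "(c, w') \<in> coxeter_graph m (center - B)"
proof -
  have B': "B' \<in> bad_separators S m x y" using F by (rule good_focus_bad_separator)
  then obtain a0 b0 c0 where "bad_sep_witness S m x y B' a0 b0 c0"
    by (rule bad_separator_witness)
  moreover have "w' \<in> B'" using good_focus_adjacent_center[OF F] w' by blast
  ultimately have "simplex S m {x, y, w'}" by (rule bad_sep_witness_simplex)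
  then have "m c w' < \<infinity>" using c by (auto simp: simplex_def)
  then show ?thesis using c w' bad_edge_subset_center by auto
qed

text \<open>A path in S - B from the apex c that leaves the center runs through the foci of some
  bad separator B'; it enters and leaves them through B' - B, whose vertices are all adjacent
  to c inside the center.\<close>

lemma rtrancl_coxeter_graph_center:
  assumes c: "c \<in> {x, y}" "c \<notin> B"
    and path: "(c, w) \<in> (coxeter_graph m (S - B))\<^sup>*" and w: "w \<in> center"
  shows "(c, w) \<in> (coxeter_graph m (center - B))\<^sup>*"
proof -
  have "w \<in> center \<and> (c, w) \<in> (coxeter_graph m (center - B))\<^sup>* \<or>
      (\<exists>B'. good_focus S m x y B' w \<and> \<not> B' \<subseteq> B)"
    using path
  proof (induction rule: rtrancl_induct)
    case base
    then show ?case using bad_edge_subset_center c(1) by auto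
  next
    case (step w w')
    have edge: "w \<in> S - B" "w' \<in> S - B" "m w w' < \<infinity>" "m w' w < \<infinity>"
      using step.hyps(2) m_sym[of w w'] by auto
    show ?case
    proof (cases "w' \<in> center")
      case True
      from step.IH have "(c, w') \<in> (coxeter_graph m (center - B))\<^sup>*"
      proof
        assume "w \<in> center \<and> (c, w) \<in> (coxeter_graph m (center - B))\<^sup>*"
        then show ?thesis
          using rtrancl_coxeter_graph_step[of c w m "center - B" w'] True edge by auto
      next
        assume "\<exists>B'. good_focus S m x y B' w \<and> \<not> B' \<subseteq> B"
        then obtain B' where "good_focus S m x y B' w" by blast
        then have "(c, w') \<in> coxeter_graph m (center - B)"
          using center_neighbour_of_focus_adjacent_apex[OF c] True edge by blast
        then show ?thesis by (rule r_into_rtrancl)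
      qed
      then show ?thesis using True by blast
    next
      case False
      then obtain B' where F': "good_focus S m x y B' w'" using edge by (auto simp: mem_center)
      from step.IH show ?thesis
      proof
        assume "w \<in> center \<and> (c, w) \<in> (coxeter_graph m (center - B))\<^sup>*"
        then have "w \<in> B'" using good_focus_adjacent_center[OF F'] edge(4) by blast
        then show ?thesis using F' edge(1) by blast
      next
        assume "\<exists>B''. good_focus S m x y B'' w \<and> \<not> B'' \<subseteq> B"
        then obtain B'' where "good_focus S m x y B'' w" "\<not> B'' \<subseteq> B" by blast
        moreover have "w' \<in> S - center" using False edge(2) by blast
        ultimately show ?thesis using good_focus_adjacent_outside_center edge(3) by blast
      qed
    qed
  qed
  then show ?thesis using w by (auto simp: mem_center)
qed

lemma bad_separators_center: "bad_separators center m x y = {}"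
proof (rule ccontr)
  assume "bad_separators center m x y \<noteq> {}"
  then obtain B f a b c where w0: "bad_sep_witness center m x y B a b c"
    and ms0: "min_separator center m B c f"
    by (auto simp: bad_separators_def good_focus_def)
  have w: "bad_sep_witness S m x y B a b c" using w0 by (rule bad_sep_witness_center)
  have H: "B \<subseteq> center" "c \<in> center - B" "f \<in> center - B"
    "(c, f) \<notin> (coxeter_graph m (center - B))\<^sup>*"
    using ms0 by (auto simp: min_separator_def separator_iff)
  have "separator S m B c f"
    using H center_subset rtrancl_coxeter_graph_center[OF bad_sep_witness_apex[OF w]]
    by (auto simp: separator_iff)
  then have "min_separator S m B c f" by (rule min_separator_of_subset[OF ms0 _ center_subset])
  then have "good_focus S m x y B f" using w H(3) center_subset unfolding good_focus_def by blast
  then show False using H(3) by (simp add: mem_center)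
qed

end

lemma reduced_visual_star_decomp_center_eq:
  assumes "reduced_visual_star_decomp S m \<B> (\<lambda>B. B \<union> F B) T" "T \<subseteq> S"
  shows "T = S - (\<Union>B\<in>\<B>. F B - B)"
proof -
  have cover: "S = T \<union> (\<Union>B\<in>\<B>. B \<union> F B)"
    using assms(1) by (simp add: reduced_visual_star_decomp_def)
  have leaf: "T \<inter> (B \<union> F B) = B" "B \<subset> T" if "B \<in> \<B>" for B
    using assms(1) that by (simp_all add: reduced_visual_star_decomp_def)
  show ?thesis
  proof (intro equalityI subsetI)
    fix s assume "s \<in> T"
    then show "s \<in> S - (\<Union>B\<in>\<B>. F B - B)" using assms(2) leaf(1) by blast
  next
    fix s assume s: "s \<in> S - (\<Union>B\<in>\<B>. F B - B)"
    then have "s \<in> T \<union> (\<Union>B\<in>\<B>. B \<union> F B)" using cover by simp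
    then show "s \<in> T" using s leaf by blast
  qed
qed

theorem theorem5p10:
  fixes S :: "'a set" and m :: "'a \<Rightarrow> 'a \<Rightarrow> enat" and x y :: 'a
  assumes "finite S"
    and "coxeter_matrix S m"
    and "bad_edge S m x y"
    and "m x y = 5"
  shows "\<exists>!S0. S0 \<subseteq> S \<and>
    reduced_visual_star_decomp S m (bad_separators S m x y)
      (\<lambda>B. B \<union> good_foci S m x y B) S0 \<and>
    {x, y} \<subseteq> S0 \<and> bad_separators S0 m x y = {}"
proof -
  let ?BS = "bad_separators S m x y" and ?L = "\<lambda>B. B \<union> good_foci S m x y B"
  let ?S0 = "coxeter_5_edge.center S m x y"
  have "coxeter_5_edge S m x y"
    using assms(2-4) by (simp add: coxeter_5_edge_def bad_edge_def)
  note center_subset = coxeter_5_edge.center_subset[OF this]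
    and center_decomp = coxeter_5_edge.reduced_visual_star_decomp_center[OF this]
    and bad_edge_subset_center = coxeter_5_edge.bad_edge_subset_center[OF this]
    and bad_separators_center = coxeter_5_edge.bad_separators_center[OF this]
  show ?thesis
  proof (rule ex1I[of _ ?S0])
    show "?S0 \<subseteq> S \<and> reduced_visual_star_decomp S m ?BS ?L ?S0 \<and>
        {x, y} \<subseteq> ?S0 \<and> bad_separators ?S0 m x y = {}"
      by (intro conjI center_subset center_decomp bad_edge_subset_center bad_separators_center)
  next
    fix T
    assume "T \<subseteq> S \<and> reduced_visual_star_decomp S m ?BS ?L T \<and>
      {x, y} \<subseteq> T \<and> bad_separators T m x y = {}"
    then have "T = S - (\<Union>B\<in>?BS. good_foci S m x y B - B)"
      by (intro reduced_visual_star_decomp_center_eq) blast+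
    also have "\<dots> = ?S0"
      by (rule reduced_visual_star_decomp_center_eq[symmetric, OF center_decomp center_subset])
    finally show "T = ?S0" .
  qed
qed

end
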